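(* For every $x\in\mathcal X$, the maps $\mu\mapsto C^\mu(x)$ and $\mu\mapsto D^\mu(x)$ are right-continuous on $[0,\infty)$ (i.e. for every $\mu\ge0$ they are constant on $[\mu,\mu+\varepsilon)$ for some $\varepsilon>0$).
   Context: Let $\alpha\in(0,1)$. $\mathcal I$ is a finite collection of subsets of $\mathcal Y$ enumerated in a fixed lexicographic order, and $w:\mathcal I\to(0,B)$ a bounded positive weight. For $x\in\mathcal X$, $C\in\mathcal I$, $\hat p_C(x)\in[0,1]$ is a fixed estimate of $\mathbb P(Y\in C\mid X=x)$. For $\mu\ge0$ let $\hat\ell_{x,C}(\mu)=w(C)\hat p_C(x)+\mu(\hat p_C(x)-(1-\alpha))$. $C^\mu(x)$ is a maximizer of $\hat\ell_{x,C}(\mu)$ over $C\in\mathcal I$, ties broken in favor of the smallest weight $w(C)$ and then the smallest index; $D^\mu(x)=\mathbb 1\{\max_{C\in\mathcal I}\hat\ell_{x,C}(\mu)>0\}$. *)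

theory Defs
  imports Complex_Main
begin

text \<open>The finite collection \<I> is given as a list Cs (distinct, nonempty); the position
  of a set in the list is its index in the fixed enumeration.
  w: weights, phat x C: estimate of P(Y in C | X = x).\<close>

definition ell :: "('y set \<Rightarrow> real) \<Rightarrow> ('x \<Rightarrow> 'y set \<Rightarrow> real) \<Rightarrow> real
                   \<Rightarrow> 'x \<Rightarrow> 'y set \<Rightarrow> real \<Rightarrow> real" where
  "ell w phat \<alpha> x C \<mu> = w C * phat x C + \<mu> * (phat x C - (1 - \<alpha>))"

definition idx :: "'a list \<Rightarrow> 'a \<Rightarrow> nat" where
  "idx xs a = (LEAST i. i < length xs \<and> xs ! i = a)"

definition selected :: "'y set list \<Rightarrow> ('y set \<Rightarrow> real) \<Rightarrow> ('x \<Rightarrow> 'y set \<Rightarrow> real) \<Rightarrow> real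
                   \<Rightarrow> real \<Rightarrow> 'x \<Rightarrow> 'y set \<Rightarrow> bool" where
  "selected Cs w phat \<alpha> \<mu> x C \<longleftrightarrow>
     C \<in> set Cs \<and>
     (\<forall>C'\<in>set Cs. ell w phat \<alpha> x C' \<mu> \<le> ell w phat \<alpha> x C \<mu>) \<and>
     (\<forall>C'\<in>set Cs. ell w phat \<alpha> x C' \<mu> = ell w phat \<alpha> x C \<mu> \<longrightarrow> w C \<le> w C') \<and>
     (\<forall>C'\<in>set Cs. ell w phat \<alpha> x C' \<mu> = ell w phat \<alpha> x C \<mu> \<and> w C' = w C
          \<longrightarrow> idx Cs C \<le> idx Cs C')"

definition Cmu :: "'y set list \<Rightarrow> ('y set \<Rightarrow> real) \<Rightarrow> ('x \<Rightarrow> 'y set \<Rightarrow> real) \<Rightarrow> real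
                   \<Rightarrow> real \<Rightarrow> 'x \<Rightarrow> 'y set" where
  "Cmu Cs w phat \<alpha> \<mu> x = (THE C. selected Cs w phat \<alpha> \<mu> x C)"

definition Dmu :: "'y set list \<Rightarrow> ('y set \<Rightarrow> real) \<Rightarrow> ('x \<Rightarrow> 'y set \<Rightarrow> real) \<Rightarrow> real
                   \<Rightarrow> real \<Rightarrow> 'x \<Rightarrow> nat" where
  "Dmu Cs w phat \<alpha> \<mu> x =
     (if Max ((\<lambda>C. ell w phat \<alpha> x C \<mu>) ` set Cs) > 0 then 1 else 0)"

end

theory Submission
  imports Defs "HOL-Library.Product_Lexorder"
begin

text \<open>Each score \<open>\<mu> \<mapsto> ell w phat \<alpha> x C \<mu>\<close> is affine in \<open>\<mu>\<close>. Strict inequalities between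
  finitely many continuous functions survive a small step to the right, so only ties at \<open>\<mu>\<close>
  matter. A tie with a competitor of larger weight means the competitor has the smaller
  estimate \<open>phat\<close>, hence the smaller slope, so every tie is resolved in favour of the selected
  set. For \<open>D\<close>, a score that is not positive at \<open>\<mu> \<ge> 0\<close> has a non-positive slope and stays
  non-positive.\<close>

lemma nth_idx: "a \<in> set xs \<Longrightarrow> xs ! idx xs a = a"
  unfolding idx_def
  by (rule LeastI2_ex[where P = "\<lambda>i. i < length xs \<and> xs ! i = a"])
     (auto simp: in_set_conv_nth)

(* Compared in the lexicographic order of Product_Lexorder, not componentwise. *)
definition selection_key :: "'y set list \<Rightarrow> ('y set \<Rightarrow> real) \<Rightarrow> ('x \<Rightarrow> 'y set \<Rightarrow> real) \<Rightarrow> real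
                   \<Rightarrow> real \<Rightarrow> 'x \<Rightarrow> 'y set \<Rightarrow> real \<times> real \<times> int" where
  "selection_key Cs w phat \<alpha> \<mu> x C = (ell w phat \<alpha> x C \<mu>, - w C, - int (idx Cs C))"

lemma selected_iff_maximal_key:
  "selected Cs w phat \<alpha> \<mu> x C \<longleftrightarrow>
     C \<in> set Cs \<and> (\<forall>C'\<in>set Cs. selection_key Cs w phat \<alpha> \<mu> x C' \<le> selection_key Cs w phat \<alpha> \<mu> x C)"
  unfolding selected_def selection_key_def by (auto simp: less_le)

lemma selected_exists:
  assumes "Cs \<noteq> []"
  shows "\<exists>C. selected Cs w phat \<alpha> \<mu> x C"
proof -
  let ?key = "selection_key Cs w phat \<alpha> \<mu> x"
  have "Max (?key ` set Cs) \<in> ?key ` set Cs"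
    using assms by (intro Max_in) auto
  then obtain C where "C \<in> set Cs" "?key C = Max (?key ` set Cs)"
    by auto
  then show ?thesis
    unfolding selected_iff_maximal_key by auto
qed

lemma selected_unique:
  assumes "selected Cs w phat \<alpha> \<mu> x C" and "selected Cs w phat \<alpha> \<mu> x C'"
  shows "C = C'"
proof -
  have "selection_key Cs w phat \<alpha> \<mu> x C = selection_key Cs w phat \<alpha> \<mu> x C'"
    using assms unfolding selected_iff_maximal_key by (meson order_antisym)
  then have "idx Cs C = idx Cs C'"
    unfolding selection_key_def by simp
  then show ?thesis
    using assms nth_idx unfolding selected_def by metis
qed

lemma Cmu_eqI:
  assumes "selected Cs w phat \<alpha> \<mu> x C"
  shows "Cmu Cs w phat \<alpha> \<mu> x = C"
  unfolding Cmu_def by (intro the_equality assms) (rule selected_unique[OF _ assms])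

lemma ell_affine:
  "ell w phat \<alpha> x C \<nu> = ell w phat \<alpha> x C \<mu> + (\<nu> - \<mu>) * (phat x C - (1 - \<alpha>))"
  unfolding ell_def by (simp add: algebra_simps)

lemma tendsto_ell: "(ell w phat \<alpha> x C \<longlongrightarrow> ell w phat \<alpha> x C \<mu>) (at \<mu> within S)"
  unfolding ell_def by (intro tendsto_intros)

lemma ell_tie_resolved_right:
  assumes tie: "ell w phat \<alpha> x C \<mu> = ell w phat \<alpha> x C0 \<mu>"
    and "w C0 \<le> w C" and "0 < w C" and "0 \<le> phat x C0" and "0 \<le> \<mu>" and "\<mu> \<le> \<nu>"
  shows "ell w phat \<alpha> x C \<nu> \<le> ell w phat \<alpha> x C0 \<nu>"
proof -
  have "(w C + \<mu>) * phat x C = (w C0 + \<mu>) * phat x C0"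
    using tie unfolding ell_def by (simp add: algebra_simps)
  also have "\<dots> \<le> (w C + \<mu>) * phat x C0"
    using assms by (intro mult_right_mono) auto
  finally have "phat x C \<le> phat x C0"
    using assms by (simp add: mult_le_cancel_left_pos)
  then have "(\<nu> - \<mu>) * phat x C \<le> (\<nu> - \<mu>) * phat x C0"
    using \<open>\<mu> \<le> \<nu>\<close> by (intro mult_left_mono) auto
  then show ?thesis
    using tie ell_affine[of w phat \<alpha> x C \<nu> \<mu>] ell_affine[of w phat \<alpha> x C0 \<nu> \<mu>]
    by (simp add: algebra_simps)
qed

lemma selected_if_ties_persist:
  assumes "selected Cs w phat \<alpha> \<mu> x C0"
    and "\<forall>C\<in>set Cs. ell w phat \<alpha> x C \<nu> \<le> ell w phat \<alpha> x C0 \<nu> \<and>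
           (ell w phat \<alpha> x C \<nu> = ell w phat \<alpha> x C0 \<nu> \<longrightarrow> ell w phat \<alpha> x C \<mu> = ell w phat \<alpha> x C0 \<mu>)"
  shows "selected Cs w phat \<alpha> \<nu> x C0"
  using assms unfolding selected_def by (metis (no_types, lifting))

lemma eventually_selected_at_right:
  assumes w_pos: "\<And>C. C \<in> set Cs \<Longrightarrow> 0 < w C"
    and phat_nonneg: "\<And>C. C \<in> set Cs \<Longrightarrow> 0 \<le> phat x C"
    and "0 \<le> \<mu>" and sel: "selected Cs w phat \<alpha> \<mu> x C0"
  shows "eventually (\<lambda>\<nu>. selected Cs w phat \<alpha> \<nu> x C0) (at_right \<mu>)"
proof -
  let ?L = "ell w phat \<alpha> x"
  have "C0 \<in> set Cs"
    using sel unfolding selected_def by blast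
  have "eventually (\<lambda>\<nu>. ?L C \<nu> \<le> ?L C0 \<nu> \<and> (?L C \<nu> = ?L C0 \<nu> \<longrightarrow> ?L C \<mu> = ?L C0 \<mu>))
          (at_right \<mu>)" if "C \<in> set Cs" for C
  proof (cases "?L C \<mu> = ?L C0 \<mu>")
    case True
    then have "?L C \<nu> \<le> ?L C0 \<nu>" if "\<mu> < \<nu>" for \<nu>
      using sel \<open>C \<in> set Cs\<close> \<open>C0 \<in> set Cs\<close> \<open>\<mu> < \<nu>\<close> \<open>0 \<le> \<mu>\<close> w_pos phat_nonneg
      by (intro ell_tie_resolved_right) (auto simp: selected_def)
    then show ?thesis
      using True eventually_at_right_less[of \<mu>] by (auto elim: eventually_mono)
  next
    case False
    then have "0 < ?L C0 \<mu> - ?L C \<mu>"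
      using sel \<open>C \<in> set Cs\<close> unfolding selected_def by force
    with tendsto_diff[OF tendsto_ell tendsto_ell]
    have "eventually (\<lambda>\<nu>. 0 < ?L C0 \<nu> - ?L C \<nu>) (at_right \<mu>)"
      by (rule order_tendstoD(1))
    then show ?thesis
      by (auto elim: eventually_mono)
  qed
  then have "eventually (\<lambda>\<nu>. \<forall>C\<in>set Cs.
      ?L C \<nu> \<le> ?L C0 \<nu> \<and> (?L C \<nu> = ?L C0 \<nu> \<longrightarrow> ?L C \<mu> = ?L C0 \<mu>)) (at_right \<mu>)"
    by (intro eventually_ball_finite) auto
  then show ?thesis
    by (rule eventually_mono) (rule selected_if_ties_persist[OF sel])
qed

lemma eventually_Cmu_at_right:
  assumes "Cs \<noteq> []"
    and "\<And>C. C \<in> set Cs \<Longrightarrow> 0 < w C" and "\<And>C. C \<in> set Cs \<Longrightarrow> 0 \<le> phat x C"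
    and "0 \<le> \<mu>"
  shows "eventually (\<lambda>\<nu>. Cmu Cs w phat \<alpha> \<nu> x = Cmu Cs w phat \<alpha> \<mu> x) (at_right \<mu>)"
proof -
  obtain C0 where sel: "selected Cs w phat \<alpha> \<mu> x C0"
    using selected_exists[OF assms(1), of w phat \<alpha> \<mu> x] by blast
  show ?thesis
    using eventually_selected_at_right[OF assms(2-4) sel]
  proof (rule eventually_mono)
    fix \<nu> assume "selected Cs w phat \<alpha> \<nu> x C0"
    then show "Cmu Cs w phat \<alpha> \<nu> x = Cmu Cs w phat \<alpha> \<mu> x"
      using Cmu_eqI[OF sel] by (simp add: Cmu_eqI)
  qed
qed

lemma ell_nonpos_right:
  assumes "ell w phat \<alpha> x C \<mu> \<le> 0"
    and "\<alpha> \<le> 1" and "0 < w C" and "0 \<le> \<mu>" and "\<mu> \<le> \<nu>"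
  shows "ell w phat \<alpha> x C \<nu> \<le> 0"
proof -
  have "phat x C - (1 - \<alpha>) \<le> 0"
  proof (rule ccontr)
    assume "\<not> ?thesis"
    then have "0 < w C * phat x C" and "0 \<le> \<mu> * (phat x C - (1 - \<alpha>))"
      using assms by auto
    then show False
      using assms(1) unfolding ell_def by linarith
  qed
  then have "(\<nu> - \<mu>) * (phat x C - (1 - \<alpha>)) \<le> 0"
    using \<open>\<mu> \<le> \<nu>\<close> by (simp add: mult_nonneg_nonpos)
  then show ?thesis
    using assms(1) ell_affine[of w phat \<alpha> x C \<nu> \<mu>] by linarith
qed

lemma Dmu_eq_ex_ell_pos:
  assumes "Cs \<noteq> []"
  shows "Dmu Cs w phat \<alpha> \<mu> x = (if \<exists>C\<in>set Cs. 0 < ell w phat \<alpha> x C \<mu> then 1 else 0)"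
  using assms by (simp add: Dmu_def Max_gr_iff)

lemma eventually_Dmu_at_right:
  assumes "Cs \<noteq> []" and "\<alpha> \<le> 1" and "\<And>C. C \<in> set Cs \<Longrightarrow> 0 < w C" and "0 \<le> \<mu>"
  shows "eventually (\<lambda>\<nu>. Dmu Cs w phat \<alpha> \<nu> x = Dmu Cs w phat \<alpha> \<mu> x) (at_right \<mu>)"
proof (cases "\<exists>C\<in>set Cs. 0 < ell w phat \<alpha> x C \<mu>")
  case True
  then obtain C where "C \<in> set Cs" and "0 < ell w phat \<alpha> x C \<mu>"
    by blast
  then have "eventually (\<lambda>\<nu>. 0 < ell w phat \<alpha> x C \<nu>) (at_right \<mu>)"
    using order_tendstoD(1)[OF tendsto_ell, of 0 w phat \<alpha> x C \<mu> "{\<mu><..}"] by simp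
  then show ?thesis
    by (rule eventually_mono) (use True \<open>C \<in> set Cs\<close> in \<open>auto simp: Dmu_eq_ex_ell_pos[OF assms(1)]\<close>)
next
  case False
  then have "\<not> (\<exists>C\<in>set Cs. 0 < ell w phat \<alpha> x C \<nu>)" if "\<mu> < \<nu>" for \<nu>
    using ell_nonpos_right[of w phat \<alpha> x _ \<mu> \<nu>] assms that by (meson less_imp_le not_less)
  then show ?thesis
    using False eventually_at_right_less[of \<mu>]
    by (auto simp: Dmu_eq_ex_ell_pos[OF assms(1)] elim: eventually_mono)
qed

lemma right_interval_of_eventually_at_right:
  fixes \<mu> :: real
  assumes "P \<mu>" and "eventually P (at_right \<mu>)"
  shows "\<exists>\<epsilon>>0. \<forall>\<nu>. \<mu> \<le> \<nu> \<and> \<nu> < \<mu> + \<epsilon> \<longrightarrow> P \<nu>"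
proof -
  obtain b where "\<mu> < b" and "\<forall>\<nu>>\<mu>. \<nu> < b \<longrightarrow> P \<nu>"
    using assms(2) unfolding eventually_at_right_field by blast
  then show ?thesis
    using assms(1) by (intro exI[of _ "b - \<mu>"]) (auto simp: le_less)
qed

theorem proposition10:
  fixes Cs :: "'y set list" and w :: "'y set \<Rightarrow> real"
    and phat :: "'x \<Rightarrow> 'y set \<Rightarrow> real" and \<alpha> B :: real
  assumes "0 < \<alpha>" and "\<alpha> < 1"
    and "Cs \<noteq> []" and "distinct Cs"
    and "\<And>C. C \<in> set Cs \<Longrightarrow> 0 < w C \<and> w C < B"
    and "\<And>x C. C \<in> set Cs \<Longrightarrow> 0 \<le> phat x C \<and> phat x C \<le> 1"
  shows "\<forall>x \<mu>. \<mu> \<ge> 0 \<longrightarrow>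
           (\<exists>\<epsilon>>0. \<forall>\<nu>. \<mu> \<le> \<nu> \<and> \<nu> < \<mu> + \<epsilon> \<longrightarrow> Cmu Cs w phat \<alpha> \<nu> x = Cmu Cs w phat \<alpha> \<mu> x) \<and>
           (\<exists>\<epsilon>>0. \<forall>\<nu>. \<mu> \<le> \<nu> \<and> \<nu> < \<mu> + \<epsilon> \<longrightarrow> Dmu Cs w phat \<alpha> \<nu> x = Dmu Cs w phat \<alpha> \<mu> x)"
proof (intro allI impI conjI)
  fix x and \<mu> :: real
  assume "0 \<le> \<mu>"
  have "eventually (\<lambda>\<nu>. Cmu Cs w phat \<alpha> \<nu> x = Cmu Cs w phat \<alpha> \<mu> x) (at_right \<mu>)"
    using assms(3,5,6) \<open>0 \<le> \<mu>\<close> by (intro eventually_Cmu_at_right) auto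
  then show "\<exists>\<epsilon>>0. \<forall>\<nu>. \<mu> \<le> \<nu> \<and> \<nu> < \<mu> + \<epsilon> \<longrightarrow> Cmu Cs w phat \<alpha> \<nu> x = Cmu Cs w phat \<alpha> \<mu> x"
    by (intro right_interval_of_eventually_at_right) auto
  have "eventually (\<lambda>\<nu>. Dmu Cs w phat \<alpha> \<nu> x = Dmu Cs w phat \<alpha> \<mu> x) (at_right \<mu>)"
    using assms(2,3,5) \<open>0 \<le> \<mu>\<close> by (intro eventually_Dmu_at_right) auto
  then show "\<exists>\<epsilon>>0. \<forall>\<nu>. \<mu> \<le> \<nu> \<and> \<nu> < \<mu> + \<epsilon> \<longrightarrow> Dmu Cs w phat \<alpha> \<nu> x = Dmu Cs w phat \<alpha> \<mu> x"
    by (intro right_interval_of_eventually_at_right) auto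
qed

end
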